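(* Let $(\mathscr X,d)$ be a metric space and $(\mu_n)_{n\geqslant1}$ a sequence of positive Borel measures on $\mathscr X$ such that $M:=\limsup_{n\to\infty}\mu_n(\mathscr X)<\infty$. Let $\varphi:[0,\infty)\to[0,\infty)$ be an increasing function such that $\varphi(s)\leqslant s/2$ for all $s$ and $\lim_{s\to\infty}\varphi(s)=\infty$. Then either $(\mu_n)_{n\geqslant1}$ is a vanishing sequence, or there exists an increasing mapping $j:\mathbf N^*\to\mathbf N^*$ such that the subsequence $(\mu_{j(n)})_{n\geqslant1}$ satisfies one of the following properties: (i) There are $k\in\mathbf N^*$, positive numbers $m_1,\dots,m_k$, sequences of points $(x_n^i)_{n\geqslant1}\subset\mathscr X$ and increasing sequences of positive numbers $(r_n^i)_{n\geqslant1}$ with $r_n^i\to\infty$ as $n\to\infty$, $i\in\{1,\dots,k\}$, such that: (a) for each $n$ the balls $B(x_n^i,r_n^i)$, $i\in\{1,\dots,k\}$, are disjoint; (b) for each $i\in\{1,\dots,k\}$, $\mu_{j(n)}(B(x_n^i,\varphi(r_n^i)))\to m_i$ as $n\to\infty$, $\mu_{j(n)}\big(B(x_n^i,r_n^i)\setminus B(x_n^i,\varphi(r_n^i))\big)\leqslant \frac{1}{2^{n+i}}$, and the sequence of measures $\big({\mu_{j(n)}}_{|B(x_n^i,r_n^i)}\big)_{n\geqslant1}$ concentrates around $(x_n^i)_{n\geqslant1}$; (c) the sequence of measures $\big({\mu_{j(n)}}_{|\mathscr X\setminus\cup_{i=1}^kB(x_n^i,r_n^i)}\big)_{n\geqslant1}$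 is a vanishing sequence. (ii) There are positive numbers $m_1,\dots,m_k,\dots$ with $m_{k+1}\leqslant 2m_k$, sequences of points $(x_n^i)_{n\geqslant i}\subset\mathscr X$ and increasing sequences of positive numbers $(r_n^i)_{n\geqslant i}$ such that $r_n^k\to\infty$ as $n\to\infty$ for each fixed $k$, and: (a) for each $n$ the balls $B(x_n^1,r_n^1),\dots,B(x_n^n,r_n^n)$ are disjoint; (b) for each $i$, $\mu_{j(n)}(B(x_n^i,\varphi(r_n^i)))\to m_i$ as $n\to\infty$, $\mu_{j(n)}\big(B(x_n^i,r_n^i)\setminus B(x_n^i,\varphi(r_n^i))\big)\leqslant\frac{1}{2^{n+i}}$, and the sequence $\big({\mu_{j(n)}}_{|B(x_n^i,r_n^i)}\big)_{n\geqslant i}$ concentrates around $(x_n^i)_{n\geqslant i}$; (c) denoting, for $n\geqslant\ell$, by $\tilde q_n^\ell$ the concentration function of ${\mu_{j(n)}}_{|\mathscr X\setminus\cup_{i=1}^\ell B(x_n^i,r_n^i)}$, one has $\lim_{\ell\to\infty}\Big(\lim_{t\to\infty}\big(\limsup_{n\to\infty}\tilde q_n^\ell(t)\big)\Big)=0$; (d) the sequence of measures $\big({\mu_{j(n)}}_{|\mathscr X\setminus\cup_{i=1}^nB(x_n^i,r_n^i)}\big)_{n\geqslant1}$ is a vanishing sequence.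
   Context: $B(x,r)$ denotes the open ball of center $x$ and radius $r$ in $\mathscr X$. For a Borel measure $\mu$ and a Borel set $A$, $\mu_{|A}(E)=\mu(A\cap E)$. The concentration function of a positive Borel measure $\mu$ on $\mathscr X$ is $q(t)=\sup_{x\in\mathscr X}\mu(B(x,t))$, $t\geqslant0$. A sequence $(\nu_n)$ of positive Borel measures concentrates around a sequence of points $(x_n)\subset\mathscr X$ if for every $\varepsilon>0$ there is $R_\varepsilon>0$ with $\nu_n(\mathscr X\setminus B(x_n,R_\varepsilon))<\varepsilon$ for all $n$. A sequence $(\nu_n)$ is vanishing if for every $r>0$, $\sup_{x\in\mathscr X}\nu_n(B(x,r))\to0$ as $n\to\infty$. *)

theory Defs
  imports "HOL-Analysis.Analysis"
begin

definition restr :: "'a measure \<Rightarrow> 'a set \<Rightarrow> 'a measure" where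
  "restr \<mu> A = density \<mu> (indicator A)"

definition conc_fun :: "'a::metric_space measure \<Rightarrow> real \<Rightarrow> ennreal" where
  "conc_fun \<mu> t = (SUP x. emeasure \<mu> (ball x t))"

definition vanishing :: "(nat \<Rightarrow> 'a::metric_space measure) \<Rightarrow> bool" where
  "vanishing \<nu> \<longleftrightarrow> (\<forall>r>0. (\<lambda>n. conc_fun (\<nu> n) r) \<longlonglongrightarrow> 0)"

definition concentrates_from :: "nat \<Rightarrow> (nat \<Rightarrow> 'a::metric_space measure) \<Rightarrow> (nat \<Rightarrow> 'a) \<Rightarrow> bool" where
  "concentrates_from n0 \<nu> x \<longleftrightarrow>
     (\<forall>\<epsilon>::real>0. \<exists>R>0. \<forall>n\<ge>n0. emeasure (\<nu> n) (UNIV - ball (x n) R) < ennreal \<epsilon>)"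

end

theory Submission
  imports Defs
begin

(* Lions' concentration-compactness by iterated extraction of profiles. Given centres found so far,
   let D be the largest limiting mass nu_n(B(y_n, t)) along a subsequence whose centres y_n escape to
   infinity from all of them. If the sequence does not vanish, D > 0 initially. Each step picks centres
   y_n and a further subsequence on which R \<mapsto> lim nu_n(B(y_n, R)) increases to a mass m > D/2; then D
   can only decrease. Either D reaches 0 after finitely many steps, or, since the masses m_i sum to at
   most the total mass, D tends to 0. A diagonal subsequence with radii r_n^i growing slowly enough
   that the balls are disjoint and all relevant ball masses are within 2^-(n+i+2) of their limits gives
   (a) and (b); the mass that the remainder puts in a ball of fixed radius is asymptotically at most D,
   which gives the vanishing statements. *)

section \<open>Subsequences as index sets\<close>

(* Limits along an infinite S are limits of the subsequence enumerating S (tendsto_along_range_iff);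
   successive extractions then become inclusions of index sets. *)
definition along :: "nat set \<Rightarrow> nat filter" where
  "along S = inf sequentially (principal S)"

lemma eventually_along: "eventually P (along S) \<longleftrightarrow> (\<exists>N. \<forall>n\<ge>N. n \<in> S \<longrightarrow> P n)"
  unfolding along_def eventually_inf_principal eventually_sequentially by simp

lemma along_mono: "S \<subseteq> T \<Longrightarrow> along S \<le> along T"
  unfolding along_def by (simp add: inf.coboundedI2)

lemma along_neq_bot:
  assumes "infinite S"
  shows "along S \<noteq> bot"
proof
  assume "along S = bot"
  then obtain N where "\<forall>n\<ge>N. n \<notin> S"
    using eventually_along[of "\<lambda>_. False" S] by auto
  then have "S \<subseteq> {..<N}" by (meson lessThan_iff not_le subsetI)
  with assms show False using finite_subset by blast
qed

lemma filtermap_sequentially_strict_mono: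
  assumes "strict_mono \<sigma>"
  shows "filtermap \<sigma> sequentially = along (range \<sigma>)"
proof (rule antisym)
  show "filtermap \<sigma> sequentially \<le> along (range \<sigma>)"
    unfolding le_filter_def eventually_filtermap eventually_along eventually_sequentially
  proof (intro allI impI)
    fix P assume "\<exists>N. \<forall>n\<ge>N. n \<in> range \<sigma> \<longrightarrow> P n"
    then obtain N where "\<forall>n\<ge>N. n \<in> range \<sigma> \<longrightarrow> P n" by blast
    moreover have "n \<le> \<sigma> n" for n using strict_mono_imp_increasing[OF assms] .
    ultimately show "\<exists>N. \<forall>n\<ge>N. P (\<sigma> n)" by (meson le_trans rangeI)
  qed
  show "along (range \<sigma>) \<le> filtermap \<sigma> sequentially"
    unfolding le_filter_def eventually_filtermap eventually_along eventually_sequentially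
  proof (intro allI impI)
    fix P assume "\<exists>N. \<forall>n\<ge>N. P (\<sigma> n)"
    then obtain N where N: "\<forall>n\<ge>N. P (\<sigma> n)" by blast
    have "P n" if "\<sigma> N \<le> n" "n \<in> range \<sigma>" for n
      using that N assms by (auto simp: strict_mono_less_eq)
    then show "\<exists>N. \<forall>n\<ge>N. n \<in> range \<sigma> \<longrightarrow> P n" by blast
  qed
qed

lemma tendsto_along_range_iff:
  assumes "strict_mono \<sigma>"
  shows "(f \<longlongrightarrow> L) (along (range \<sigma>)) \<longleftrightarrow> ((f \<circ> \<sigma>) \<longlongrightarrow> L) sequentially"
  unfolding filtermap_sequentially_strict_mono[OF assms, symmetric] filterlim_filtermap comp_def ..

(* Sequential compactness of the Tychonoff cube [-C, C]^\<nat> does the diagonal argument. *)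
lemma bounded_sequences_converge_along:
  fixes a :: "nat \<Rightarrow> nat \<Rightarrow> real"
  assumes S: "infinite S" and bounded: "\<And>R n. n \<in> S \<Longrightarrow> \<bar>a R n\<bar> \<le> C"
  shows "\<exists>T\<subseteq>S. infinite T \<and> (\<forall>R. \<exists>L. (a R \<longlongrightarrow> L) (along T))"
proof -
  define e where "e = enumerate S"
  have e: "strict_mono e" "\<And>n. e n \<in> S"
    using S by (auto simp: e_def strict_mono_enumerate enumerate_in_set)
  define K :: "(nat \<Rightarrow> real) set" where "K = Pi\<^sub>E UNIV (\<lambda>_. {-C..C})"
  have "compactin euclidean K"
    unfolding K_def euclidean_product_topology[symmetric] compactin_PiE by (intro disjI2 ballI) simp
  then have "seq_compact K" by (simp add: compact_imp_seq_compact)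
  define f where "f n = (\<lambda>R. a R (e n))" for n
  have "f n \<in> K" for n
  proof -
    have "a R (e n) \<in> {-C..C}" for R
      using bounded[OF e(2), of R n] by (auto simp: abs_le_iff)
    then show ?thesis unfolding K_def f_def by (simp add: PiE_iff)
  qed
  then obtain l h where h: "strict_mono h" and lim: "(f \<circ> h) \<longlonglongrightarrow> l"
    using seq_compactE[OF \<open>seq_compact K\<close>] by metis
  have "(a R \<longlongrightarrow> l R) (along (range (e \<circ> h)))" for R
  proof -
    have "continuous_on UNIV (\<lambda>x::nat \<Rightarrow> real. x R)" by simp
    from continuous_on_tendsto_compose[OF this lim] show ?thesis
      unfolding tendsto_along_range_iff[OF strict_mono_o[OF e(1) h]] by (simp add: f_def comp_def)
  qed
  moreover have "infinite (range (e \<circ> h))"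
    using range_inj_infinite strict_mono_imp_inj_on strict_mono_o[OF e(1) h] by blast
  ultimately show ?thesis using e(2) by (intro exI[of _ "range (e \<circ> h)"]) auto
qed

lemma bounded_sequence_converges_along:
  fixes f :: "nat \<Rightarrow> real"
  assumes "infinite S" "\<And>n. n \<in> S \<Longrightarrow> \<bar>f n\<bar> \<le> C"
  shows "\<exists>T\<subseteq>S. infinite T \<and> (\<exists>L. (f \<longlongrightarrow> L) (along T))"
  using bounded_sequences_converge_along[of S "\<lambda>_. f" C] assms by blast

lemma bounded_or_tendsto_at_top_along:
  fixes f :: "nat \<Rightarrow> real"
  assumes "infinite T"
  shows "\<exists>T'\<subseteq>T. infinite T' \<and> ((\<exists>K. \<forall>n\<in>T'. f n \<le> K) \<or> filterlim f at_top (along T'))"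
proof (cases "\<exists>K. infinite {n\<in>T. f n \<le> K}")
  case True
  then obtain K where "infinite {n\<in>T. f n \<le> K}" by blast
  then show ?thesis by (intro exI[of _ "{n\<in>T. f n \<le> K}"]) auto
next
  case False
  have "filterlim f at_top (along T)"
    unfolding filterlim_at_top
  proof
    fix Z
    obtain N where "{n\<in>T. f n \<le> Z} \<subseteq> {..<N}"
      using False finite_nat_bounded by blast
    then show "eventually (\<lambda>n. Z \<le> f n) (along T)"
      unfolding eventually_along by (intro exI[of _ N]) force
  qed
  with assms show ?thesis by blast
qed

lemma finite_family_bounded_or_tendsto_at_top_along:
  fixes d :: "nat \<Rightarrow> nat \<Rightarrow> real"
  assumes "finite I" "infinite T"
  shows "\<exists>T'\<subseteq>T. infinite T' \<and>
           (\<forall>i\<in>I. (\<exists>K. \<forall>n\<in>T'. d i n \<le> K) \<or> filterlim (d i) at_top (along T'))"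
  using assms(1)
proof (induction I rule: finite_induct)
  case empty
  then show ?case using assms(2) by blast
next
  case (insert i I)
  then obtain T1 where T1: "T1 \<subseteq> T" "infinite T1"
    and P1: "\<forall>i\<in>I. (\<exists>K. \<forall>n\<in>T1. d i n \<le> K) \<or> filterlim (d i) at_top (along T1)" by blast
  obtain T2 where T2: "T2 \<subseteq> T1" "infinite T2"
    and P2: "(\<exists>K. \<forall>n\<in>T2. d i n \<le> K) \<or> filterlim (d i) at_top (along T2)"
    using bounded_or_tendsto_at_top_along[OF T1(2), of "d i"] by blast
  have "(\<exists>K. \<forall>n\<in>T2. d i' n \<le> K) \<or> filterlim (d i') at_top (along T2)" if "i' \<in> I" for i'
    using P1 that T2(1) filterlim_mono[OF _ order_refl along_mono[OF T2(1)]] by blast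
  with P2 T1 T2 show ?case by (intro exI[of _ T2]) auto
qed

lemma infinite_above_of_less_Limsup:
  fixes f :: "nat \<Rightarrow> ennreal"
  assumes "ennreal a < limsup f" "0 \<le> a"
  shows "\<exists>b>a. infinite {n. ennreal b < f n}"
proof -
  obtain c where c: "ennreal a < c" "c < limsup f" using dense[OF assms(1)] by blast
  then have "c \<noteq> top" using top.not_eq_extremum by fastforce
  define b where "b = enn2real c"
  have cb: "c = ennreal b" unfolding b_def using \<open>c \<noteq> top\<close> by (metis ennreal_enn2real less_top)
  have "a < b" using c(1) assms(2) unfolding cb by (simp add: ennreal_less_iff)
  from c(2) have "\<not> limsup f \<le> c" by simp
  then obtain y where "c < y" "\<not> eventually (\<lambda>n. f n < y) sequentially"
    unfolding Limsup_le_iff by blast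
  then have "frequently (\<lambda>n. ennreal b < f n) sequentially"
    unfolding not_eventually cb by (auto elim!: frequently_elim1 simp: not_less intro: less_le_trans)
  then have "infinite {n. ennreal b < f n}"
    unfolding cofinite_eq_sequentially[symmetric] frequently_cofinite .
  with \<open>a < b\<close> show ?thesis by blast
qed

lemma eventually_bounded_of_limsup_less_top:
  fixes f :: "nat \<Rightarrow> ennreal"
  assumes "limsup f < \<infinity>"
  obtains N C where "0 < C" "\<And>n. N \<le> n \<Longrightarrow> f n \<le> ennreal C"
proof -
  obtain y where y: "limsup f < y" "y < top" using assms dense by auto
  then obtain N where N: "\<And>n. N \<le> n \<Longrightarrow> f n < y"
    using Limsup_lessD[OF y(1)] unfolding eventually_sequentially by blast
  have "y = ennreal (enn2real y)" using y(2) by simp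
  also have "\<dots> \<le> ennreal (max 1 (enn2real y))" by (rule ennreal_leI) simp
  finally have "y \<le> ennreal (max 1 (enn2real y))" .
  with N have "\<And>n. N \<le> n \<Longrightarrow> f n \<le> ennreal (max 1 (enn2real y))"
    using less_imp_le order_trans by blast
  moreover have "0 < max 1 (enn2real y)" by (simp add: less_max_iff_disj)
  ultimately show thesis by (rule that[rotated])
qed

lemma mono_tendsto_SUP_at_top:
  fixes f :: "'a::linorder \<Rightarrow> 'b::{complete_linorder, linorder_topology}"
  assumes "mono f"
  shows "(f \<longlongrightarrow> (SUP t. f t)) at_top"
proof (rule increasing_tendsto)
  show "eventually (\<lambda>t. f t \<le> (SUP t. f t)) at_top" by (simp add: SUP_upper)
  fix y assume "y < (SUP t. f t)"
  then obtain t0 where "y < f t0" by (auto simp: less_SUP_iff)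
  then show "eventually (\<lambda>t. y < f t) at_top"
    unfolding eventually_at_top_linorder using assms by (auto dest: monoD intro: less_le_trans)
qed

lemma emeasure_restr:
  assumes "A \<in> sets M" "E \<in> sets M"
  shows "emeasure (restr M A) E = emeasure M (A \<inter> E)"
proof -
  have "emeasure (restr M A) E = (\<integral>\<^sup>+x. indicator A x * indicator E x \<partial>M)"
    unfolding restr_def using assms by (subst emeasure_density) auto
  also have "\<dots> = (\<integral>\<^sup>+x. indicator (A \<inter> E) x \<partial>M)"
    by (simp add: indicator_inter_arith)
  also have "\<dots> = emeasure M (A \<inter> E)" using assms by (simp add: nn_integral_indicator)
  finally show ?thesis .
qed

lemma ball_subset_ball_dist:
  fixes x y :: "'a::metric_space"
  assumes "dist x y + s \<le> r"
  shows "ball x s \<subseteq> ball y r"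
proof
  fix z assume "z \<in> ball x s"
  moreover have "dist y z \<le> dist y x + dist x z" by (rule dist_triangle)
  ultimately show "z \<in> ball y r" using assms by (simp add: dist_commute)
qed

lemma complement_UN_balls_borel: "UNIV - (\<Union>i\<in>I. ball (x i) (r i)) \<in> sets borel"
  by (intro borel_closed closed_Diff closed_UNIV open_UN ballI open_ball)

section \<open>Profiles of a uniformly bounded sequence of measures\<close>

(* Only the measures with index at least N0 are constrained; all index sets below lie in {N0..}. *)
locale bounded_measures =
  fixes \<mu> :: "nat \<Rightarrow> 'a::metric_space measure" and N0 :: nat and C :: real
  assumes N0_pos: "1 \<le> N0"
    and sets_mu: "\<And>n. N0 \<le> n \<Longrightarrow> sets (\<mu> n) = sets borel"
    and emeasure_UNIV_le: "\<And>n. N0 \<le> n \<Longrightarrow> emeasure (\<mu> n) UNIV \<le> ennreal C"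
    and C_pos: "0 < C"
begin

abbreviation nu :: "nat \<Rightarrow> 'a set \<Rightarrow> real" where
  "nu n A \<equiv> measure (\<mu> n) A"

lemma space_mu: "N0 \<le> n \<Longrightarrow> space (\<mu> n) = UNIV"
  using sets_eq_imp_space_eq[OF sets_mu] by simp

lemma finite_measure_mu: "N0 \<le> n \<Longrightarrow> finite_measure (\<mu> n)"
  using emeasure_UNIV_le[of n] space_mu[of n]
  by (intro finite_measureI) (metis ennreal_less_top infinity_ennreal_def leD top.not_eq_extremum)

lemma emeasure_eq_nu: "N0 \<le> n \<Longrightarrow> emeasure (\<mu> n) A = ennreal (nu n A)"
  using finite_measure.emeasure_eq_measure[OF finite_measure_mu] by blast

lemma nu_le_C:
  assumes "N0 \<le> n"
  shows "nu n A \<le> C"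
proof -
  have "nu n A \<le> nu n UNIV"
    using finite_measure.bounded_measure[OF finite_measure_mu[OF assms]] space_mu[OF assms] by simp
  moreover have "ennreal (nu n UNIV) \<le> ennreal C"
    using emeasure_UNIV_le[OF assms] emeasure_eq_nu[OF assms] by simp
  ultimately show ?thesis using C_pos by (simp add: ennreal_le_iff2)
qed

lemma nu_mono: "N0 \<le> n \<Longrightarrow> B \<in> sets borel \<Longrightarrow> A \<subseteq> B \<Longrightarrow> nu n A \<le> nu n B"
  by (rule finite_measure.finite_measure_mono[OF finite_measure_mu]) (auto simp: sets_mu)

lemma nu_ball_mono: "N0 \<le> n \<Longrightarrow> r \<le> r' \<Longrightarrow> nu n (ball x r) \<le> nu n (ball x r')"
  by (rule nu_mono) auto

lemma conc_fun_restr: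
  assumes "N0 \<le> n" "A \<in> sets borel"
  shows "conc_fun (restr (\<mu> n) A) t = (SUP x. ennreal (nu n (A \<inter> ball x t)))"
  unfolding conc_fun_def using emeasure_restr[of A "\<mu> n"] assms by (simp add: sets_mu emeasure_eq_nu)

lemma conc_fun_restr_mono:
  assumes "N0 \<le> n" "B \<in> sets borel" "A \<in> sets borel" "A \<subseteq> B" "t \<le> t'"
  shows "conc_fun (restr (\<mu> n) A) t \<le> conc_fun (restr (\<mu> n) B) t'"
  unfolding conc_fun_restr[OF assms(1,2)] conc_fun_restr[OF assms(1,3)]
proof (rule SUP_mono)
  fix x
  show "\<exists>y\<in>UNIV. ennreal (nu n (A \<inter> ball x t)) \<le> ennreal (nu n (B \<inter> ball y t'))"
    using assms by (intro bexI[of _ x] ennreal_leI nu_mono) auto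
qed

definition escaping_limits :: "nat set \<Rightarrow> (nat \<Rightarrow> nat \<Rightarrow> 'a) \<Rightarrow> nat \<Rightarrow> real set" where
  "escaping_limits S X l = {v. \<exists>T y t. T \<subseteq> S \<and> infinite T \<and>
      (\<forall>i\<in>{1..l}. filterlim (\<lambda>n. dist (y n) (X i n)) at_top (along T)) \<and>
      ((\<lambda>n. nu n (ball (y n) t)) \<longlongrightarrow> v) (along T)}"

definition escaping_mass :: "nat set \<Rightarrow> (nat \<Rightarrow> nat \<Rightarrow> 'a) \<Rightarrow> nat \<Rightarrow> real" where
  "escaping_mass S X l = Sup (insert 0 (escaping_limits S X l))"

lemma escaping_limit_le_C:
  assumes "S \<subseteq> {N0..}" "v \<in> escaping_limits S X l"
  shows "v \<le> C"
proof -
  from assms(2) obtain T y t where T: "T \<subseteq> S" "infinite T"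
    and lim: "((\<lambda>n. nu n (ball (y n) t)) \<longlongrightarrow> v) (along T)"
    unfolding escaping_limits_def by blast
  have "eventually (\<lambda>n. nu n (ball (y n) t) \<le> C) (along T)"
    unfolding eventually_along using T(1) assms(1) nu_le_C by blast
  then show ?thesis by (rule tendsto_upperbound[OF lim _ along_neq_bot[OF T(2)]])
qed

lemma bdd_above_escaping_limits:
  assumes "S \<subseteq> {N0..}"
  shows "bdd_above (insert 0 (escaping_limits S X l))"
proof (rule bdd_aboveI[where M = C])
  fix v assume "v \<in> insert 0 (escaping_limits S X l)"
  then show "v \<le> C" using escaping_limit_le_C[OF assms] C_pos by auto
qed

lemma escaping_mass_nonneg: "S \<subseteq> {N0..} \<Longrightarrow> 0 \<le> escaping_mass S X l"
  unfolding escaping_mass_def by (rule cSup_upper[OF _ bdd_above_escaping_limits]) simp_all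

lemma escaping_limit_le_mass:
  "S \<subseteq> {N0..} \<Longrightarrow> v \<in> escaping_limits S X l \<Longrightarrow> v \<le> escaping_mass S X l"
  unfolding escaping_mass_def by (rule cSup_upper[OF _ bdd_above_escaping_limits]) simp_all

lemma escaping_limits_antimono:
  "S' \<subseteq> S \<Longrightarrow> l \<le> l' \<Longrightarrow> escaping_limits S' X l' \<subseteq> escaping_limits S X l"
  unfolding escaping_limits_def by auto (meson atLeastAtMost_iff dual_order.trans order_refl)

lemma escaping_mass_antimono:
  assumes "S' \<subseteq> S" "l \<le> l'" "S \<subseteq> {N0..}"
  shows "escaping_mass S' X l' \<le> escaping_mass S X l"
  unfolding escaping_mass_def
  using escaping_limits_antimono[OF assms(1,2), of X]
  by (intro cSup_mono bdd_above_escaping_limits[OF assms(3)]) auto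

lemma escaping_mass_cong:
  "(\<And>i. i \<in> {1..l} \<Longrightarrow> X i = X' i) \<Longrightarrow> escaping_mass S X l = escaping_mass S X' l"
  unfolding escaping_mass_def escaping_limits_def by simp

lemma escaping_mass_half_attained:
  assumes "S \<subseteq> {N0..}" "0 < escaping_mass S X l"
  shows "\<exists>v\<in>escaping_limits S X l. escaping_mass S X l / 2 < v"
proof -
  have "escaping_mass S X l / 2 < Sup (insert 0 (escaping_limits S X l))"
    using assms(2) unfolding escaping_mass_def by simp
  then obtain v where "v \<in> insert 0 (escaping_limits S X l)" "escaping_mass S X l / 2 < v"
    using less_cSupE by blast
  with assms(2) show ?thesis by auto
qed

lemma heavy_escaping_balls_le_escaping_mass:
  assumes T: "infinite T" "T \<subseteq> S" and S: "S \<subseteq> {N0..}"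
    and diverge: "\<forall>i\<in>{1..l}. filterlim (\<lambda>n. dist (y n) (X i n)) at_top (along T)"
    and heavy: "\<And>n. n \<in> T \<Longrightarrow> b \<le> nu n (ball (y n) t)"
  shows "b \<le> escaping_mass S X l"
proof -
  have "\<bar>nu n (ball (y n) t)\<bar> \<le> C" if "n \<in> T" for n
    using that T(2) S nu_le_C[of n "ball (y n) t"] by auto
  then have "\<exists>T'\<subseteq>T. infinite T' \<and> (\<exists>v. ((\<lambda>n. nu n (ball (y n) t)) \<longlongrightarrow> v) (along T'))"
    by (rule bounded_sequence_converges_along[OF T(1)])
  then obtain T' v where T': "T' \<subseteq> T" "infinite T'"
    and lim: "((\<lambda>n. nu n (ball (y n) t)) \<longlongrightarrow> v) (along T')"
    by blast
  have "eventually (\<lambda>n. b \<le> nu n (ball (y n) t)) (along T')"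
    unfolding eventually_along using T'(1) heavy by (intro exI[of _ 0]) auto
  then have "b \<le> v" by (rule tendsto_lowerbound[OF lim _ along_neq_bot[OF T'(2)]])
  moreover have "v \<in> escaping_limits S X l"
    unfolding escaping_limits_def using T' T(2) diverge lim
    by (intro CollectI exI[of _ T'] exI[of _ y] exI[of _ t])
      (auto intro: filterlim_mono[OF _ order_refl along_mono[OF T'(1)]])
  ultimately show ?thesis using escaping_limit_le_mass[OF S] by (meson order_trans)
qed

lemma escaping_mass_pos_if_not_vanishing:
  assumes "\<not> vanishing \<mu>"
  shows "0 < escaping_mass {N0..} X 0"
proof -
  from assms obtain r where "0 < r" "\<not> (\<lambda>n. conc_fun (\<mu> n) r) \<longlonglongrightarrow> 0"
    unfolding vanishing_def by blast
  then have "limsup (\<lambda>n. conc_fun (\<mu> n) r) \<noteq> 0"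
    using tendsto_0_if_Limsup_eq_0_ennreal by blast
  then have "ennreal 0 < limsup (\<lambda>n. conc_fun (\<mu> n) r)"
    by (simp add: zero_less_iff_neq_zero)
  then obtain b where b: "0 < b" "infinite {n. ennreal b < conc_fun (\<mu> n) r}"
    using infinite_above_of_less_Limsup[of 0] by auto
  define P where "P = {n. ennreal b < conc_fun (\<mu> n) r} - {..<N0}"
  have P: "infinite P" "P \<subseteq> {N0..}" unfolding P_def using b(2) by auto
  have "\<exists>x. b < nu n (ball x r)" if "n \<in> P" for n
  proof -
    from that have "N0 \<le> n" "ennreal b < (SUP x. emeasure (\<mu> n) (ball x r))"
      unfolding P_def conc_fun_def by auto
    then show ?thesis using b(1) by (auto simp: less_SUP_iff emeasure_eq_nu ennreal_less_iff)
  qed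
  then obtain y where "\<And>n. n \<in> P \<Longrightarrow> b \<le> nu n (ball (y n) r)"
    by (metis less_imp_le)
  then have "b \<le> escaping_mass {N0..} X 0"
    by (intro heavy_escaping_balls_le_escaping_mass[OF P(1,2) order_refl]) auto
  with b(1) show ?thesis by simp
qed

(* A greedy choice: the new profile carries more than half of the mass that can still escape
   (escaping_mass S X l < 2 * m), which forces that mass to 0 if the extraction never stops. *)
definition new_profile ::
    "nat set \<Rightarrow> (nat \<Rightarrow> nat \<Rightarrow> 'a) \<Rightarrow> nat \<Rightarrow> nat set \<Rightarrow> (nat \<Rightarrow> 'a) \<Rightarrow> (nat \<Rightarrow> real) \<Rightarrow> real \<Rightarrow> bool" where
  "new_profile S X l S' y q m \<longleftrightarrow> S' \<subseteq> S \<and> infinite S' \<and>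
     (\<forall>i\<in>{1..l}. filterlim (\<lambda>n. dist (y n) (X i n)) at_top (along S')) \<and>
     (\<forall>R::nat. ((\<lambda>n. nu n (ball (y n) (real R))) \<longlongrightarrow> q R) (along S')) \<and>
     incseq q \<and> q \<longlonglongrightarrow> m \<and> (\<forall>R. q R \<le> m) \<and>
     escaping_mass S X l < 2 * m \<and> 0 < m \<and> m \<le> escaping_mass S X l"

lemma radial_profile_exists:
  assumes "infinite T" "T \<subseteq> {N0..}"
  shows "\<exists>T'\<subseteq>T. \<exists>q. infinite T' \<and> incseq q \<and> (\<forall>R. q R \<le> C) \<and>
           (\<forall>R::nat. ((\<lambda>n. nu n (ball (y n) (real R))) \<longlongrightarrow> q R) (along T'))"
proof -
  have "\<bar>nu n (ball (y n) (real R))\<bar> \<le> C" if "n \<in> T" for R n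
    using that assms(2) nu_le_C[of n "ball (y n) (real R)"] by auto
  then have "\<exists>T'\<subseteq>T. infinite T' \<and>
      (\<forall>R. \<exists>L. ((\<lambda>n. nu n (ball (y n) (real R))) \<longlongrightarrow> L) (along T'))"
    by (rule bounded_sequences_converge_along[OF assms(1)])
  then obtain T' where T': "T' \<subseteq> T" "infinite T'"
    and "\<forall>R. \<exists>L. ((\<lambda>n. nu n (ball (y n) (real R))) \<longlongrightarrow> L) (along T')"
    by blast
  then obtain q where q: "\<And>R. ((\<lambda>n. nu n (ball (y n) (real R))) \<longlongrightarrow> q R) (along T')"
    by metis
  have nb: "along T' \<noteq> bot" by (rule along_neq_bot[OF T'(2)])
  have evT: "eventually (\<lambda>n. N0 \<le> n) (along T')"
    unfolding eventually_along using T' assms(2) by auto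
  have "q R \<le> q R'" if "R \<le> R'" for R R'
  proof (rule tendsto_le[OF nb q[of R'] q[of R]])
    show "eventually (\<lambda>n. nu n (ball (y n) (real R)) \<le> nu n (ball (y n) (real R'))) (along T')"
      using evT by eventually_elim (simp add: nu_ball_mono that)
  qed
  then have "incseq q" by (simp add: incseq_def)
  moreover have "q R \<le> C" for R
  proof (rule tendsto_upperbound[OF q _ nb])
    show "eventually (\<lambda>n. nu n (ball (y n) (real R)) \<le> C) (along T')"
      using evT by eventually_elim (rule nu_le_C)
  qed
  ultimately show ?thesis using T' q by (intro exI[of _ T'] exI[of _ q]) auto
qed

lemma new_profile_exists:
  assumes S: "S \<subseteq> {N0..}" and D: "0 < escaping_mass S X l"
  shows "\<exists>S' y q m. new_profile S X l S' y q m"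
proof -
  let ?D = "escaping_mass S X l"
  obtain v T y t where T: "T \<subseteq> S" "infinite T" and "?D / 2 < v"
    and diverge: "\<forall>i\<in>{1..l}. filterlim (\<lambda>n. dist (y n) (X i n)) at_top (along T)"
    and lim: "((\<lambda>n. nu n (ball (y n) t)) \<longlongrightarrow> v) (along T)"
    using escaping_mass_half_attained[OF S D] unfolding escaping_limits_def by blast
  obtain T' q where T': "T' \<subseteq> T" "infinite T'" and "incseq q" and qC: "\<And>R. q R \<le> C"
    and q: "\<And>R. ((\<lambda>n. nu n (ball (y n) (real R))) \<longlongrightarrow> q R) (along T')"
    using radial_profile_exists[OF T(2)] T(1) S by blast
  have bdd: "bdd_above (range q)" using qC by (intro bdd_aboveI2)
  define m where "m = (SUP R. q R)"
  have "q \<longlonglongrightarrow> m" unfolding m_def by (rule LIMSEQ_incseq_SUP[OF bdd \<open>incseq q\<close>])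
  have q_le: "q R \<le> m" for R unfolding m_def by (rule cSUP_upper[OF _ bdd]) simp
  have diverge': "\<forall>i\<in>{1..l}. filterlim (\<lambda>n. dist (y n) (X i n)) at_top (along T')"
    using diverge filterlim_mono[OF _ order_refl along_mono[OF T'(1)]] by blast
  have "v \<le> q (nat \<lceil>t\<rceil>)"
  proof (rule tendsto_le[OF along_neq_bot[OF T'(2)] q tendsto_mono[OF along_mono[OF T'(1)] lim]])
    have "eventually (\<lambda>n. N0 \<le> n) (along T')" unfolding eventually_along using T' T S by auto
    then show "eventually (\<lambda>n. nu n (ball (y n) t) \<le> nu n (ball (y n) (real (nat \<lceil>t\<rceil>)))) (along T')"
      by (auto elim!: eventually_mono intro: nu_ball_mono simp: real_nat_ceiling_ge)
  qed
  then have "v \<le> m" using q_le[of "nat \<lceil>t\<rceil>"] by linarith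
  have "q R \<in> escaping_limits S X l" for R
    unfolding escaping_limits_def using T' T diverge' q
    by (intro CollectI exI[of _ T'] exI[of _ y] exI[of _ "real R"]) auto
  then have "m \<le> ?D" unfolding m_def using escaping_limit_le_mass[OF S] by (intro cSUP_least) auto
  show ?thesis
    unfolding new_profile_def using T' T diverge' q \<open>incseq q\<close> \<open>q \<longlonglongrightarrow> m\<close> q_le
      \<open>?D / 2 < v\<close> \<open>v \<le> m\<close> \<open>m \<le> ?D\<close> escaping_mass_nonneg[OF S]
    by (intro exI[of _ T'] exI[of _ y] exI[of _ q] exI[of _ m]) auto
qed

definition choose_profile ::
    "nat set \<Rightarrow> (nat \<Rightarrow> nat \<Rightarrow> 'a) \<Rightarrow> nat \<Rightarrow> nat set \<times> (nat \<Rightarrow> 'a) \<times> (nat \<Rightarrow> real) \<times> real" where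
  "choose_profile S X l = (SOME (S', y, q, m). new_profile S X l S' y q m)"

lemma choose_profile:
  assumes "S \<subseteq> {N0..}" "0 < escaping_mass S X l" "choose_profile S X l = (S', y, q, m)"
  shows "new_profile S X l S' y q m"
proof -
  let ?P = "\<lambda>(S', y, q, m). new_profile S X l S' y q m"
  have "\<exists>z. ?P z" using new_profile_exists[OF assms(1,2)] by auto
  from someI_ex[OF this] show ?thesis using assms(3) unfolding choose_profile_def by simp
qed

(* A state consists of the current index set and, indexed by profile number, the centres, radial
   profiles and masses found so far. *)
fun profile_step :: "nat \<Rightarrow> nat set \<times> (nat \<Rightarrow> nat \<Rightarrow> 'a) \<times> (nat \<Rightarrow> nat \<Rightarrow> real) \<times> (nat \<Rightarrow> real)
    \<Rightarrow> nat set \<times> (nat \<Rightarrow> nat \<Rightarrow> 'a) \<times> (nat \<Rightarrow> nat \<Rightarrow> real) \<times> (nat \<Rightarrow> real)" where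
  "profile_step l (S, X, Q, M) =
     (if 0 < escaping_mass S X l then
       (case choose_profile S X l of
          (S', y, q, m) \<Rightarrow> (S', X(Suc l := y), Q(Suc l := q), M(Suc l := m)))
     else (S, X, Q, M))"

primrec profile_state ::
    "nat \<Rightarrow> nat set \<times> (nat \<Rightarrow> nat \<Rightarrow> 'a) \<times> (nat \<Rightarrow> nat \<Rightarrow> real) \<times> (nat \<Rightarrow> real)" where
  "profile_state 0 = ({N0..}, \<lambda>_ _. undefined, \<lambda>_ _. 0, \<lambda>_. 0)"
| "profile_state (Suc l) = profile_step l (profile_state l)"

definition stage_set :: "nat \<Rightarrow> nat set" where
  "stage_set l = fst (profile_state l)"

definition stage_centers :: "nat \<Rightarrow> nat \<Rightarrow> nat \<Rightarrow> 'a" where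
  "stage_centers l = fst (snd (profile_state l))"

definition stage_radials :: "nat \<Rightarrow> nat \<Rightarrow> nat \<Rightarrow> real" where
  "stage_radials l = fst (snd (snd (profile_state l)))"

definition stage_masses :: "nat \<Rightarrow> nat \<Rightarrow> real" where
  "stage_masses l = snd (snd (snd (profile_state l)))"

definition prof_center :: "nat \<Rightarrow> nat \<Rightarrow> 'a" where
  "prof_center i = stage_centers i i"

definition prof_radial :: "nat \<Rightarrow> nat \<Rightarrow> real" where
  "prof_radial i = stage_radials i i"

definition prof_mass :: "nat \<Rightarrow> real" where
  "prof_mass i = stage_masses i i"

definition residual_mass :: "nat \<Rightarrow> real" where
  "residual_mass l = escaping_mass (stage_set l) prof_center l"

lemma profile_state_Suc:
  "profile_state (Suc l) = profile_step l (stage_set l, stage_centers l, stage_radials l, stage_masses l)"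
  by (simp add: stage_set_def stage_centers_def stage_radials_def stage_masses_def)

lemma profile_state_Suc_cases [consumes 1, case_names stop step]:
  assumes "stage_set l \<subseteq> {N0..}"
  obtains (stop) "\<not> 0 < escaping_mass (stage_set l) (stage_centers l) l"
    "stage_set (Suc l) = stage_set l" "stage_centers (Suc l) = stage_centers l"
    "stage_radials (Suc l) = stage_radials l" "stage_masses (Suc l) = stage_masses l"
  | (step) y q m where "0 < escaping_mass (stage_set l) (stage_centers l) l"
    "new_profile (stage_set l) (stage_centers l) l (stage_set (Suc l)) y q m"
    "stage_centers (Suc l) = (stage_centers l)(Suc l := y)"
    "stage_radials (Suc l) = (stage_radials l)(Suc l := q)"
    "stage_masses (Suc l) = (stage_masses l)(Suc l := m)"
proof (cases "0 < escaping_mass (stage_set l) (stage_centers l) l")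
  case True
  obtain S' y q m where choice: "choose_profile (stage_set l) (stage_centers l) l = (S', y, q, m)"
    using prod_cases4 by blast
  have "profile_state (Suc l) = (S', (stage_centers l)(Suc l := y), (stage_radials l)(Suc l := q),
      (stage_masses l)(Suc l := m))"
    unfolding profile_state_Suc using True choice by simp
  then show thesis
    using step[OF True] choose_profile[OF assms True choice]
    unfolding stage_set_def stage_centers_def stage_radials_def stage_masses_def by simp
next
  case False
  then have "profile_state (Suc l) = (stage_set l, stage_centers l, stage_radials l, stage_masses l)"
    unfolding profile_state_Suc by simp
  then show thesis using stop[OF False]
    unfolding stage_set_def stage_centers_def stage_radials_def stage_masses_def by simp
qed

lemma new_profile_subset: "new_profile S X l S' y q m \<Longrightarrow> S' \<subseteq> S \<and> infinite S'"
  unfolding new_profile_def by blast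

lemma stage_set_Suc:
  assumes "stage_set l \<subseteq> {N0..}" "infinite (stage_set l)"
  shows "stage_set (Suc l) \<subseteq> stage_set l \<and> infinite (stage_set (Suc l))"
  using assms(1)
proof (cases rule: profile_state_Suc_cases)
  case stop
  then show ?thesis using assms(2) by (simp add: stage_set_def)
next
  case (step y q m)
  then show ?thesis by (blast dest: new_profile_subset)
qed

lemma stage_set_subset_infinite: "stage_set l \<subseteq> {N0..} \<and> infinite (stage_set l)"
proof (induction l)
  case 0
  then show ?case by (simp add: stage_set_def infinite_Ici)
next
  case (Suc l)
  then show ?case using stage_set_Suc by blast
qed

lemma stage_set_subset: "stage_set l \<subseteq> {N0..}"
  and stage_set_infinite: "infinite (stage_set l)"
  using stage_set_subset_infinite by auto

lemma stage_set_antimono: "l \<le> l' \<Longrightarrow> stage_set l' \<subseteq> stage_set l"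
  by (induction l' rule: dec_induct) (use stage_set_Suc stage_set_subset stage_set_infinite in blast)+

lemma stage_profile_stable:
  "i \<le> l \<Longrightarrow> stage_centers l i = prof_center i \<and> stage_radials l i = prof_radial i
     \<and> stage_masses l i = prof_mass i"
proof (induction l)
  case (Suc l)
  then show ?case
    by (cases "i = Suc l"; cases rule: profile_state_Suc_cases[OF stage_set_subset[of l]])
      (auto simp: prof_center_def prof_radial_def prof_mass_def stage_centers_def
         stage_radials_def stage_masses_def)
qed (simp add: prof_center_def prof_radial_def prof_mass_def)

lemma escaping_mass_stage_centers: "escaping_mass (stage_set l) (stage_centers l) l = residual_mass l"
  unfolding residual_mass_def using stage_profile_stable by (intro escaping_mass_cong) simp

lemma residual_mass_new_profile:
  assumes "0 < residual_mass l"
  shows "new_profile (stage_set l) prof_center l (stage_set (Suc l)) (prof_center (Suc l))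
           (prof_radial (Suc l)) (prof_mass (Suc l))"
  using stage_set_subset[of l]
proof (cases rule: profile_state_Suc_cases)
  case (step y q m)
  have "prof_center (Suc l) = y" "prof_radial (Suc l) = q" "prof_mass (Suc l) = m"
    using step(3-5) by (simp_all add: prof_center_def prof_radial_def prof_mass_def)
  moreover have "new_profile (stage_set l) (stage_centers l) l = new_profile (stage_set l) prof_center l"
    using escaping_mass_stage_centers[of l] stage_profile_stable
    unfolding residual_mass_def new_profile_def by (auto intro!: ext)
  ultimately show ?thesis using step(2) by simp
qed (use assms escaping_mass_stage_centers in simp)

lemma prof_mass_Suc:
  assumes "0 < residual_mass l"
  shows "0 < prof_mass (Suc l)" and "prof_mass (Suc l) \<le> residual_mass l"
    and "residual_mass l < 2 * prof_mass (Suc l)"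
  using residual_mass_new_profile[OF assms] unfolding new_profile_def residual_mass_def by auto

lemma residual_mass_nonneg: "0 \<le> residual_mass l"
  unfolding residual_mass_def by (rule escaping_mass_nonneg[OF stage_set_subset])

lemma residual_mass_antimono: "l \<le> l' \<Longrightarrow> residual_mass l' \<le> residual_mass l"
  unfolding residual_mass_def by (intro escaping_mass_antimono stage_set_antimono stage_set_subset)

lemma residual_mass_0_pos: "\<not> vanishing \<mu> \<Longrightarrow> 0 < residual_mass 0"
  unfolding residual_mass_def by (simp add: stage_set_def escaping_mass_pos_if_not_vanishing)

end

section \<open>Diagonal extraction\<close>

locale lions_setting = bounded_measures +
  fixes \<phi> :: "real \<Rightarrow> real"
  assumes phi_nonneg: "\<And>s. 0 \<le> s \<Longrightarrow> 0 \<le> \<phi> s"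
    and phi_le: "\<And>s. 0 \<le> s \<Longrightarrow> \<phi> s \<le> s"
    and phi_at_top: "filterlim \<phi> at_top at_top"

(* At stage p of the diagonal subsequence the profiles 1, ..., act p are in use. *)
locale diagonal_extraction = lions_setting +
  fixes act :: "nat \<Rightarrow> nat"
  assumes act_mono: "mono act"
    and residual_mass_pos: "\<And>i p. 1 \<le> i \<Longrightarrow> i \<le> act p \<Longrightarrow> 0 < residual_mass (i - 1)"
begin

definition active :: "nat \<Rightarrow> bool" where
  "active i \<longleftrightarrow> 1 \<le> i \<and> (\<exists>p. i \<le> act p)"

lemma active_if_in_act: "i \<in> {1..act p} \<Longrightarrow> active i"
  unfolding active_def by auto

lemma act_le_act: "i \<le> act p0 \<Longrightarrow> p0 \<le> p \<Longrightarrow> i \<le> act p"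
  using act_mono by (meson monoD order_trans)

lemma active_new_profile:
  assumes "active i"
  shows "new_profile (stage_set (i - 1)) prof_center (i - 1) (stage_set i) (prof_center i)
           (prof_radial i) (prof_mass i)"
proof -
  obtain p where i: "1 \<le> i" "i \<le> act p" using assms unfolding active_def by blast
  then have "Suc (i - 1) = i" by simp
  with residual_mass_new_profile[OF residual_mass_pos[OF i]] show ?thesis by simp
qed

lemma active_profile:
  assumes "active i"
  shows "((\<lambda>n. nu n (ball (prof_center i n) (real R))) \<longlongrightarrow> prof_radial i R) (along (stage_set i))"
    and "incseq (prof_radial i)" and "prof_radial i \<longlonglongrightarrow> prof_mass i"
    and "prof_radial i R \<le> prof_mass i" and "0 < prof_mass i"
  using active_new_profile[OF assms] unfolding new_profile_def by auto

lemma active_centers_diverge: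
  assumes "active i" "1 \<le> i'" "i' < i"
  shows "filterlim (\<lambda>n. dist (prof_center i n) (prof_center i' n)) at_top (along (stage_set i))"
  using active_new_profile[OF assms(1)] assms(2,3) unfolding new_profile_def by auto

definition tol :: "nat \<Rightarrow> nat \<Rightarrow> real" where
  "tol i p = 1 / 2 ^ (p + i + 2)"

lemma tol_pos: "0 < tol i p"
  by (simp add: tol_def)

lemma tol_antimono: "p \<le> p' \<Longrightarrow> tol i p' \<le> tol i p"
  unfolding tol_def by (intro divide_left_mono) (auto intro: power_increasing)

lemma tol_tendsto_0: "(\<lambda>p. tol i p) \<longlonglongrightarrow> 0"
proof -
  have "(\<lambda>p. (1/2::real) ^ p * (1 / 2 ^ (i + 2))) \<longlonglongrightarrow> 0 * (1 / 2 ^ (i + 2))"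
    by (intro tendsto_intros LIMSEQ_power_zero) simp
  then show ?thesis by (simp add: tol_def power_add power_divide mult_ac)
qed

(* The core ball of radius \<phi> (radius i p) must already carry the profile mass up to tol i p;
   taking the least such integer above p makes the radius nondecreasing and unbounded in p. *)
definition radius :: "nat \<Rightarrow> nat \<Rightarrow> nat" where
  "radius i p = (LEAST N. p < N \<and> prof_mass i - prof_radial i (nat \<lfloor>\<phi> (real N)\<rfloor>) < tol i p)"

lemma radius_exists:
  assumes "active i"
  shows "\<exists>N. p < N \<and> prof_mass i - prof_radial i (nat \<lfloor>\<phi> (real N)\<rfloor>) < tol i p"
proof -
  have "eventually (\<lambda>R. dist (prof_radial i R) (prof_mass i) < tol i p) sequentially"
    using active_profile(3)[OF assms] tol_pos tendsto_iff by blast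
  then obtain R0 where R0: "\<And>R. R0 \<le> R \<Longrightarrow> dist (prof_radial i R) (prof_mass i) < tol i p"
    unfolding eventually_sequentially by blast
  obtain s0 where s0: "\<And>s. s0 \<le> s \<Longrightarrow> real R0 \<le> \<phi> s"
    using phi_at_top unfolding filterlim_at_top eventually_at_top_linorder by blast
  define N where "N = max (Suc p) (nat \<lceil>s0\<rceil>)"
  have "s0 \<le> real N" unfolding N_def by linarith
  then have "real R0 \<le> \<phi> (real N)" by (rule s0)
  then have "R0 \<le> nat \<lfloor>\<phi> (real N)\<rfloor>" by linarith
  then have "prof_mass i - prof_radial i (nat \<lfloor>\<phi> (real N)\<rfloor>) < tol i p"
    using R0 by (auto simp: dist_real_def abs_less_iff)
  moreover have "p < N" by (simp add: N_def)
  ultimately show ?thesis by blast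
qed

lemma radius_spec:
  assumes "active i"
  shows "p < radius i p \<and> prof_mass i - prof_radial i (nat \<lfloor>\<phi> (real (radius i p))\<rfloor>) < tol i p"
  unfolding radius_def by (rule LeastI_ex[OF radius_exists[OF assms]])

lemma radius_mono:
  assumes "active i" "p \<le> p'"
  shows "radius i p \<le> radius i p'"
  unfolding radius_def[of i p]
proof (rule Least_le)
  show "p < radius i p' \<and> prof_mass i - prof_radial i (nat \<lfloor>\<phi> (real (radius i p'))\<rfloor>) < tol i p"
    using radius_spec[OF assms(1), of p'] tol_antimono[OF assms(2), of i] assms(2) by auto
qed

lemma radius_at_top:
  assumes "active i"
  shows "filterlim (\<lambda>p. real (radius i p)) at_top sequentially"
  unfolding filterlim_at_top eventually_sequentially
proof
  fix Z :: real
  have "Z \<le> real (radius i p)" if "nat \<lceil>Z\<rceil> \<le> p" for p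
    using that radius_spec[OF assms, of p] by linarith
  then show "\<exists>N. \<forall>p\<ge>N. Z \<le> real (radius i p)" by blast
qed

definition good_index :: "nat \<Rightarrow> nat \<Rightarrow> bool" where
  "good_index p n \<longleftrightarrow>
     (\<forall>i\<in>{1..act p}. \<forall>i'\<in>{1..act p}. i \<noteq> i' \<longrightarrow>
        real (radius i p) + real (radius i' p) \<le> dist (prof_center i n) (prof_center i' n)) \<and>
     (\<forall>i\<in>{1..act p}. \<forall>q\<in>{..radius i p}.
        \<bar>nu n (ball (prof_center i n) (real q)) - prof_radial i q\<bar> \<le> tol i p)"

lemma eventually_good_index: "eventually (good_index p) (along (stage_set (act p)))"
proof -
  have far: "eventually (\<lambda>n. real (radius i p) + real (radius i' p) \<le> dist (prof_center i n) (prof_center i' n))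
      (along (stage_set (act p)))"
    if "i' < i" "i \<in> {1..act p}" "i' \<in> {1..act p}" for i i'
  proof -
    have "filterlim (\<lambda>n. dist (prof_center i n) (prof_center i' n)) at_top (along (stage_set (act p)))"
      using active_centers_diverge[of i i'] that active_if_in_act
      by (auto intro: filterlim_mono[OF _ order_refl along_mono[OF stage_set_antimono]])
    then show ?thesis unfolding filterlim_at_top by blast
  qed
  have "eventually (\<lambda>n. real (radius i p) + real (radius i' p) \<le> dist (prof_center i n) (prof_center i' n))
      (along (stage_set (act p)))"
    if "i \<in> {1..act p}" "i' \<in> {1..act p}" "i \<noteq> i'" for i i'
    using that far[of i i'] far[of i' i] by (cases "i' < i") (auto simp: dist_commute add.commute)
  moreover have "eventually (\<lambda>n. \<bar>nu n (ball (prof_center i n) (real q)) - prof_radial i q\<bar> \<le> tol i p)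
      (along (stage_set (act p)))" if "i \<in> {1..act p}" for i q
  proof -
    have "((\<lambda>n. nu n (ball (prof_center i n) (real q))) \<longlongrightarrow> prof_radial i q) (along (stage_set (act p)))"
      using active_profile(1)[OF active_if_in_act[OF that]] that
      by (auto intro: tendsto_mono[OF along_mono[OF stage_set_antimono]])
    from tendstoD[OF this tol_pos[of i p]] show ?thesis
      by eventually_elim (simp add: dist_real_def)
  qed
  ultimately show ?thesis
    unfolding good_index_def by (intro eventually_conj eventually_ball_finite ballI) auto
qed

lemma good_index_exists: "\<exists>n. n \<in> stage_set (act p) \<and> c < n \<and> good_index p n"
proof -
  obtain N where N: "\<And>n. N \<le> n \<Longrightarrow> n \<in> stage_set (act p) \<Longrightarrow> good_index p n"
    using eventually_good_index[of p] unfolding eventually_along by blast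
  obtain n where "n \<in> stage_set (act p)" "max N (Suc c) \<le> n"
    using stage_set_infinite[of "act p"] unfolding infinite_nat_iff_unbounded_le by blast
  then show ?thesis using N[of n] by auto
qed

primrec diag_index :: "nat \<Rightarrow> nat" where
  "diag_index 0 = (SOME n. n \<in> stage_set (act 0) \<and> good_index 0 n)"
| "diag_index (Suc p) =
     (SOME n. n \<in> stage_set (act (Suc p)) \<and> diag_index p < n \<and> good_index (Suc p) n)"

lemma diag_index_spec: "diag_index p \<in> stage_set (act p) \<and> good_index p (diag_index p)"
proof (cases p)
  case 0
  have "\<exists>n. n \<in> stage_set (act 0) \<and> good_index 0 n" using good_index_exists by blast
  from someI_ex[OF this] show ?thesis using 0 by simp
next
  case (Suc p')
  from someI_ex[OF good_index_exists] show ?thesis using Suc by simp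
qed

lemma diag_index_less_Suc: "diag_index p < diag_index (Suc p)"
  using someI_ex[OF good_index_exists] by simp

lemma strict_mono_diag_index: "strict_mono diag_index"
  using diag_index_less_Suc by (simp add: strict_mono_Suc_iff)

lemma diag_index_ge_N0: "N0 \<le> diag_index p"
  using diag_index_spec[of p] stage_set_subset by auto

lemma diag_index_in_stage_set: "l \<le> act p \<Longrightarrow> diag_index p \<in> stage_set l"
  using diag_index_spec[of p] stage_set_antimono[of l "act p"] by auto

lemma disjoint_diag_balls:
  "disjoint_family_on (\<lambda>i. ball (prof_center i (diag_index p)) (real (radius i p))) {1..act p}"
  using diag_index_spec[of p] unfolding disjoint_family_on_def good_index_def
  by (auto intro!: disjoint_ballI)

lemma diag_ball_mass_close:
  "i \<in> {1..act p} \<Longrightarrow> q \<le> radius i p \<Longrightarrow>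
     \<bar>nu (diag_index p) (ball (prof_center i (diag_index p)) (real q)) - prof_radial i q\<bar> \<le> tol i p"
  using diag_index_spec[of p] unfolding good_index_def by auto

lemma core_mass_bounds:
  assumes i: "i \<in> {1..act p}"
  defines "n \<equiv> diag_index p" and "x \<equiv> prof_center i (diag_index p)" and "g \<equiv> real (radius i p)"
  shows "prof_mass i - 2 * tol i p \<le> nu n (ball x (\<phi> g))"
    and "nu n (ball x (\<phi> g)) \<le> nu n (ball x g)"
    and "nu n (ball x g) \<le> prof_mass i + tol i p"
    and "\<phi> g \<le> g"
proof -
  have act: "active i" by (rule active_if_in_act[OF i])
  have N: "N0 \<le> n" unfolding n_def by (rule diag_index_ge_N0)
  define q where "q = nat \<lfloor>\<phi> g\<rfloor>"
  have phi: "0 \<le> \<phi> g" "\<phi> g \<le> g" unfolding g_def by (simp_all add: phi_nonneg phi_le)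
  then show "\<phi> g \<le> g" by simp
  have "q \<le> radius i p" "real q \<le> \<phi> g" unfolding q_def using phi by (simp_all add: g_def) linarith+
  have "\<bar>nu n (ball x (real q)) - prof_radial i q\<bar> \<le> tol i p"
    unfolding n_def x_def by (rule diag_ball_mass_close[OF i \<open>q \<le> radius i p\<close>])
  moreover have "prof_mass i - prof_radial i q < tol i p"
    using radius_spec[OF act, of p] unfolding q_def g_def by blast
  moreover have "nu n (ball x (real q)) \<le> nu n (ball x (\<phi> g))"
    by (rule nu_ball_mono[OF N \<open>real q \<le> \<phi> g\<close>])
  ultimately show "prof_mass i - 2 * tol i p \<le> nu n (ball x (\<phi> g))" by linarith
  show "nu n (ball x (\<phi> g)) \<le> nu n (ball x g)" by (rule nu_ball_mono[OF N \<open>\<phi> g \<le> g\<close>])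
  have "\<bar>nu n (ball x g) - prof_radial i (radius i p)\<bar> \<le> tol i p"
    unfolding n_def x_def g_def by (rule diag_ball_mass_close[OF i order_refl])
  moreover have "prof_radial i (radius i p) \<le> prof_mass i" by (rule active_profile(4)[OF act])
  ultimately show "nu n (ball x g) \<le> prof_mass i + tol i p" by linarith
qed

lemma core_mass_tendsto:
  assumes "active i"
  shows "(\<lambda>p. nu (diag_index p) (ball (prof_center i (diag_index p)) (\<phi> (real (radius i p)))))
           \<longlonglongrightarrow> prof_mass i"
proof (rule tendsto_sandwich)
  obtain p0 where "1 \<le> i" "i \<le> act p0" using assms unfolding active_def by blast
  then have act: "eventually (\<lambda>p. i \<in> {1..act p}) sequentially"
    unfolding eventually_sequentially using act_le_act by auto
  show "eventually (\<lambda>p. prof_mass i - 2 * tol i p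
          \<le> nu (diag_index p) (ball (prof_center i (diag_index p)) (\<phi> (real (radius i p))))) sequentially"
    using act by eventually_elim (rule core_mass_bounds(1))
  show "eventually (\<lambda>p. nu (diag_index p) (ball (prof_center i (diag_index p)) (\<phi> (real (radius i p))))
          \<le> prof_mass i + tol i p) sequentially"
    using act by eventually_elim (use core_mass_bounds(2,3) in fastforce)
  show "(\<lambda>p. prof_mass i - 2 * tol i p) \<longlonglongrightarrow> prof_mass i"
    using tendsto_diff[OF tendsto_const tendsto_mult_right_zero[OF tol_tendsto_0]] by simp
  show "(\<lambda>p. prof_mass i + tol i p) \<longlonglongrightarrow> prof_mass i"
    using tendsto_add[OF tendsto_const tol_tendsto_0] by simp
qed

lemma core_emeasure_tendsto:
  assumes "active i"
  shows "(\<lambda>p. emeasure (\<mu> (diag_index p)) (ball (prof_center i (diag_index p)) (\<phi> (real (radius i p)))))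
           \<longlonglongrightarrow> ennreal (prof_mass i)"
  using tendsto_ennrealI[OF core_mass_tendsto[OF assms]] by (simp add: emeasure_eq_nu diag_index_ge_N0)

lemma annulus_emeasure_le:
  assumes i: "i \<in> {1..act p}"
  shows "emeasure (\<mu> (diag_index p)) (ball (prof_center i (diag_index p)) (real (radius i p))
           - ball (prof_center i (diag_index p)) (\<phi> (real (radius i p)))) \<le> ennreal (1 / 2 ^ (p + i))"
proof -
  let ?n = "diag_index p" and ?x = "prof_center i (diag_index p)" and ?g = "real (radius i p)"
  have N: "N0 \<le> ?n" by (rule diag_index_ge_N0)
  have "ball ?x (\<phi> ?g) \<subseteq> ball ?x ?g" using core_mass_bounds(4)[OF i] by auto
  then have "nu ?n (ball ?x ?g - ball ?x (\<phi> ?g)) = nu ?n (ball ?x ?g) - nu ?n (ball ?x (\<phi> ?g))"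
    by (intro finite_measure.finite_measure_Diff[OF finite_measure_mu[OF N]]) (auto simp: sets_mu[OF N])
  also have "\<dots> \<le> 3 * tol i p" using core_mass_bounds(1,3)[OF i] by linarith
  also have "\<dots> \<le> 4 * tol i p" using tol_pos[of i p] by simp
  also have "\<dots> = 1 / 2 ^ (p + i)" by (simp add: tol_def power_add)
  finally show ?thesis by (simp add: emeasure_eq_nu[OF N] ennreal_leI)
qed

lemma mass_outside_ball_le:
  assumes i: "i \<in> {1..act p}" and "q \<le> radius i p"
  defines "n \<equiv> diag_index p" and "x \<equiv> prof_center i (diag_index p)"
  shows "nu n (ball x (real (radius i p)) - ball x (real q)) \<le> prof_mass i - prof_radial i q + 2 * tol i p"
proof -
  have N: "N0 \<le> n" unfolding n_def by (rule diag_index_ge_N0)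
  have "ball x (real q) \<subseteq> ball x (real (radius i p))" using assms(2) by auto
  then have "nu n (ball x (real (radius i p)) - ball x (real q))
      = nu n (ball x (real (radius i p))) - nu n (ball x (real q))"
    by (intro finite_measure.finite_measure_Diff[OF finite_measure_mu[OF N]]) (auto simp: sets_mu[OF N])
  moreover have "prof_radial i q - tol i p \<le> nu n (ball x (real q))"
    using diag_ball_mass_close[OF assms(1,2)] unfolding n_def x_def by (simp add: abs_le_iff)
  ultimately show ?thesis using core_mass_bounds(3)[OF i] unfolding n_def x_def by linarith
qed

lemma concentrates_diag:
  assumes i: "1 \<le> i" and act: "\<And>p. p0 \<le> p \<Longrightarrow> i \<le> act p"
  shows "concentrates_from p0
    (\<lambda>p. restr (\<mu> (diag_index p)) (ball (prof_center i (diag_index p)) (real (radius i p))))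
    (\<lambda>p. prof_center i (diag_index p))"
  unfolding concentrates_from_def
proof (intro allI impI)
  fix \<epsilon> :: real assume "0 < \<epsilon>"
  have "active i" using assms unfolding active_def by blast
  have "eventually (\<lambda>R. dist (prof_radial i R) (prof_mass i) < \<epsilon> / 2) sequentially"
    using tendstoD[OF active_profile(3)[OF \<open>active i\<close>], of "\<epsilon> / 2"] \<open>0 < \<epsilon>\<close> by simp
  then obtain R0 where "dist (prof_radial i R0) (prof_mass i) < \<epsilon> / 2"
    unfolding eventually_sequentially by blast
  then have R0: "prof_mass i - prof_radial i R0 < \<epsilon> / 2"
    using abs_ge_minus_self[of "prof_radial i R0 - prof_mass i"] unfolding dist_real_def by linarith
  have "eventually (\<lambda>p. tol i p < \<epsilon> / 4) sequentially"
    using order_tendstoD(2)[OF tol_tendsto_0, of "\<epsilon> / 4" i] \<open>0 < \<epsilon>\<close> by simp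
  then obtain P1 where P1: "\<And>p. P1 \<le> p \<Longrightarrow> tol i p < \<epsilon> / 4"
    unfolding eventually_sequentially by blast
  define P where "P = max P1 p0"
  define R where "R = max R0 (radius i P)"
  have "0 < real R" using radius_spec[OF \<open>active i\<close>, of P] unfolding R_def by linarith
  moreover have "emeasure (restr (\<mu> (diag_index p)) (ball (prof_center i (diag_index p)) (real (radius i p))))
      (UNIV - ball (prof_center i (diag_index p)) (real R)) < ennreal \<epsilon>" if "p0 \<le> p" for p
  proof -
    let ?n = "diag_index p" and ?x = "prof_center i (diag_index p)" and ?g = "real (radius i p)"
    have N: "N0 \<le> ?n" by (rule diag_index_ge_N0)
    have "emeasure (restr (\<mu> ?n) (ball ?x ?g)) (UNIV - ball ?x (real R))
        = ennreal (nu ?n (ball ?x ?g - ball ?x (real R)))"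
      by (subst emeasure_restr) (auto simp: sets_mu[OF N] emeasure_eq_nu[OF N] Diff_eq)
    moreover have "nu ?n (ball ?x ?g - ball ?x (real R)) < \<epsilon>"
    proof (cases "radius i p \<le> R")
      case True
      then have "ball ?x ?g - ball ?x (real R) = {}" by auto
      with \<open>0 < \<epsilon>\<close> show ?thesis by (metis measure_empty)
    next
      case False
      then have "P < p" using radius_mono[OF \<open>active i\<close>, of p P] unfolding R_def by fastforce
      then have ip: "i \<in> {1..act p}" using act[of p] i unfolding P_def by auto
      have "prof_radial i R0 \<le> prof_radial i R"
        using active_profile(2)[OF \<open>active i\<close>] by (simp add: incseqD R_def)
      moreover have "tol i p < \<epsilon> / 4" using P1 \<open>P < p\<close> unfolding P_def by simp
      ultimately show ?thesis using mass_outside_ball_le[OF ip, of R] False R0 by linarith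
    qed
    ultimately show ?thesis using \<open>0 < \<epsilon>\<close> by (simp add: ennreal_lessI)
  qed
  ultimately show "\<exists>R>0. \<forall>p\<ge>p0. emeasure (restr (\<mu> (diag_index p))
      (ball (prof_center i (diag_index p)) (real (radius i p))))
      (UNIV - ball (prof_center i (diag_index p)) R) < ennreal \<epsilon>"
    by blast
qed

definition remainder :: "nat \<Rightarrow> nat \<Rightarrow> 'a set" where
  "remainder l p = UNIV - (\<Union>i\<in>{1..l}. ball (prof_center i (diag_index p)) (real (radius i p)))"

lemma remainder_borel: "remainder l p \<in> sets borel"
  unfolding remainder_def by (rule complement_UN_balls_borel)

lemma remainder_heavy_ball_far:
  assumes "i \<in> {1..l}" and "0 \<le> b" and "b < nu (diag_index p) (remainder l p \<inter> ball z t)"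
  shows "real (radius i p) < dist z (prof_center i (diag_index p)) + t"
proof (rule ccontr)
  assume "\<not> ?thesis"
  then have "ball z t \<subseteq> ball (prof_center i (diag_index p)) (real (radius i p))"
    by (intro ball_subset_ball_dist) simp
  then have "remainder l p \<inter> ball z t = {}" unfolding remainder_def using assms(1) by auto
  with assms(2,3) show False by simp
qed

(* Heavy remainder balls cannot stay at bounded distance from a centre i \<le> l, whose ball radius
   grows to infinity, so they escape from all these centres. *)
lemma heavy_remainder_balls_le_residual:
  assumes l: "l \<le> act p0" and P: "infinite P" "P \<subseteq> {p0..}" and "0 \<le> b"
    and heavy: "\<And>p. p \<in> P \<Longrightarrow> b < nu (diag_index p) (remainder l p \<inter> ball (y p) t)"
  shows "b \<le> residual_mass l"
proof -
  have inj: "inj diag_index" by (rule strict_mono_imp_inj_on[OF strict_mono_diag_index])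
  define Y where "Y n = y (inv diag_index n)" for n
  have Y: "Y (diag_index p) = y p" for p unfolding Y_def using inv_f_f[OF inj] by simp
  define S where "S = diag_index ` P"
  have "infinite S"
    unfolding S_def using P(1) finite_imageD[OF _ inj_on_subset[OF inj subset_UNIV]] by blast
  moreover have "S \<subseteq> stage_set l"
    unfolding S_def using P(2) diag_index_in_stage_set act_le_act[OF l] by auto
  ultimately have S: "infinite S" "S \<subseteq> stage_set l" by blast+
  obtain T where T: "T \<subseteq> S" "infinite T"
    and dich: "\<forall>i\<in>{1..l}. (\<exists>K. \<forall>n\<in>T. dist (Y n) (prof_center i n) \<le> K)
                  \<or> filterlim (\<lambda>n. dist (Y n) (prof_center i n)) at_top (along T)"
    using finite_family_bounded_or_tendsto_at_top_along[OF finite_atLeastAtMost S(1),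
        where d = "\<lambda>i n. dist (Y n) (prof_center i n)"] by blast
  show ?thesis
  proof (cases "\<exists>i\<in>{1..l}. \<exists>K. \<forall>n\<in>T. dist (Y n) (prof_center i n) \<le> K")
    case True
    then obtain i K where i: "i \<in> {1..l}" and K: "\<forall>n\<in>T. dist (Y n) (prof_center i n) \<le> K" by blast
    have "infinite (P \<inter> diag_index -` T)"
    proof
      assume "finite (P \<inter> diag_index -` T)"
      moreover have "T \<subseteq> diag_index ` (P \<inter> diag_index -` T)" using T(1) unfolding S_def by auto
      ultimately show False using T(2) finite_surj by blast
    qed
    then obtain p where p: "p \<in> P" "diag_index p \<in> T" "nat \<lceil>K + t\<rceil> \<le> p"
      unfolding infinite_nat_iff_unbounded_le by blast
    have "p0 \<le> p" using P(2) p(1) by auto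
    then have ip: "i \<in> {1..act p}" using i act_le_act[OF l, of p] by auto
    have "K + t < real (radius i p)"
      using radius_spec[OF active_if_in_act[OF ip], of p] p(3) by linarith
    moreover have "dist (y p) (prof_center i (diag_index p)) \<le> K" using K p(2) Y by metis
    ultimately show ?thesis using remainder_heavy_ball_far[OF i \<open>0 \<le> b\<close> heavy[OF p(1)]] by linarith
  next
    case False
    with dich have diverge: "\<forall>i\<in>{1..l}. filterlim (\<lambda>n. dist (Y n) (prof_center i n)) at_top (along T)"
      by blast
    have "b \<le> nu n (ball (Y n) t)" if nT: "n \<in> T" for n
    proof -
      obtain p where p: "p \<in> P" "n = diag_index p" using nT T(1) unfolding S_def by blast
      then have "b < nu n (remainder l p \<inter> ball (Y n) t)" using heavy Y by simp
      also have "\<dots> \<le> nu n (ball (Y n) t)" using p(2) diag_index_ge_N0 by (intro nu_mono) auto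
      finally show ?thesis by simp
    qed
    then show ?thesis unfolding residual_mass_def
      using heavy_escaping_balls_le_escaping_mass[OF T(2) _ stage_set_subset diverge] T(1) S(2) by blast
  qed
qed

lemma limsup_conc_fun_remainder_le:
  assumes l: "l \<le> act p0"
  shows "limsup (\<lambda>p. conc_fun (restr (\<mu> (diag_index p)) (remainder l p)) t) \<le> ennreal (residual_mass l)"
proof (rule ccontr)
  assume "\<not> ?thesis"
  then have "ennreal (residual_mass l) < limsup (\<lambda>p. conc_fun (restr (\<mu> (diag_index p)) (remainder l p)) t)"
    by (simp add: not_le)
  from infinite_above_of_less_Limsup[OF this residual_mass_nonneg] obtain b where b: "residual_mass l < b"
    "infinite {p. ennreal b < conc_fun (restr (\<mu> (diag_index p)) (remainder l p)) t}"
    by blast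
  have "0 \<le> b" using b(1) residual_mass_nonneg[of l] by simp
  define P where "P = {p. ennreal b < conc_fun (restr (\<mu> (diag_index p)) (remainder l p)) t} - {..<p0}"
  have P: "infinite P" "P \<subseteq> {p0..}" unfolding P_def using b(2) by auto
  have "\<exists>x. b < nu (diag_index p) (remainder l p \<inter> ball x t)" if "p \<in> P" for p
  proof -
    have "ennreal b < (SUP x. ennreal (nu (diag_index p) (remainder l p \<inter> ball x t)))"
      using that conc_fun_restr[OF diag_index_ge_N0 remainder_borel] unfolding P_def by simp
    then show ?thesis using \<open>0 \<le> b\<close> by (auto simp: less_SUP_iff ennreal_less_iff)
  qed
  then obtain y where "\<And>p. p \<in> P \<Longrightarrow> b < nu (diag_index p) (remainder l p \<inter> ball (y p) t)"
    by metis
  from heavy_remainder_balls_le_residual[OF l P \<open>0 \<le> b\<close> this] b(1) show False by simp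
qed

definition remainder_conc :: "nat \<Rightarrow> real \<Rightarrow> ennreal" where
  "remainder_conc l t = limsup (\<lambda>p. conc_fun (restr (\<mu> (diag_index p)) (remainder l p)) t)"

lemma remainder_conc_tendsto_SUP: "(remainder_conc l \<longlongrightarrow> (SUP t. remainder_conc l t)) at_top"
proof (rule mono_tendsto_SUP_at_top)
  show "mono (remainder_conc l)"
    unfolding mono_def remainder_conc_def
    by (intro allI impI Limsup_mono always_eventually conc_fun_restr_mono diag_index_ge_N0
        remainder_borel order_refl)
qed

lemma SUP_remainder_conc_le: "l \<le> act p0 \<Longrightarrow> (SUP t. remainder_conc l t) \<le> ennreal (residual_mass l)"
  unfolding remainder_conc_def using limsup_conc_fun_remainder_le by (simp add: SUP_least)

lemma vanishing_diagonal_remainder: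
  assumes "(\<lambda>l. SUP t. remainder_conc l t) \<longlonglongrightarrow> 0"
  shows "vanishing (\<lambda>p. restr (\<mu> (diag_index p)) (remainder p p))"
  unfolding vanishing_def
proof (intro allI impI)
  fix t :: real
  have "limsup (\<lambda>p. conc_fun (restr (\<mu> (diag_index p)) (remainder p p)) t) \<le> (SUP t. remainder_conc l t)"
    for l
  proof -
    have "eventually (\<lambda>p. conc_fun (restr (\<mu> (diag_index p)) (remainder p p)) t
        \<le> conc_fun (restr (\<mu> (diag_index p)) (remainder l p)) t) sequentially"
      unfolding eventually_sequentially
      by (intro exI[of _ l] allI impI conc_fun_restr_mono diag_index_ge_N0 remainder_borel order_refl)
        (auto simp: remainder_def)
    then have "limsup (\<lambda>p. conc_fun (restr (\<mu> (diag_index p)) (remainder p p)) t) \<le> remainder_conc l t"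
      unfolding remainder_conc_def by (rule Limsup_mono)
    also have "\<dots> \<le> (SUP t. remainder_conc l t)" by (rule SUP_upper) simp
    finally show ?thesis .
  qed
  then have "limsup (\<lambda>p. conc_fun (restr (\<mu> (diag_index p)) (remainder p p)) t) \<le> 0"
    by (intro tendsto_le[OF sequentially_bot assms tendsto_const]) simp
  then show "(\<lambda>p. conc_fun (restr (\<mu> (diag_index p)) (remainder p p)) t) \<longlonglongrightarrow> 0"
    by (intro tendsto_0_if_Limsup_eq_0_ennreal) simp
qed

lemma sum_prof_mass_le:
  assumes K: "K \<le> act p0"
  shows "(\<Sum>i\<in>{1..K}. prof_mass i) \<le> C"
proof (rule LIMSEQ_le_const2)
  show "(\<lambda>p. \<Sum>i\<in>{1..K}. nu (diag_index p) (ball (prof_center i (diag_index p)) (\<phi> (real (radius i p)))))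
      \<longlonglongrightarrow> (\<Sum>i\<in>{1..K}. prof_mass i)"
    using K by (intro tendsto_sum core_mass_tendsto) (auto simp: active_def intro!: exI[of _ p0])
  show "\<exists>N. \<forall>p\<ge>N. (\<Sum>i\<in>{1..K}. nu (diag_index p) (ball (prof_center i (diag_index p)) (\<phi> (real (radius i p)))))
      \<le> C"
  proof (intro exI allI impI)
    fix p assume "p0 \<le> p"
    then have Kp: "{1..K} \<subseteq> {1..act p}" using act_le_act[OF K] by auto
    have N: "N0 \<le> diag_index p" by (rule diag_index_ge_N0)
    have "disjoint_family_on (\<lambda>i. ball (prof_center i (diag_index p)) (\<phi> (real (radius i p)))) {1..K}"
      unfolding disjoint_family_on_def
    proof (intro ballI impI)
      fix i i' assume ii: "i \<in> {1..K}" "i' \<in> {1..K}" "i \<noteq> i'"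
      then have "ball (prof_center i (diag_index p)) (real (radius i p))
          \<inter> ball (prof_center i' (diag_index p)) (real (radius i' p)) = {}"
        using disjoint_diag_balls[of p] Kp unfolding disjoint_family_on_def by blast
      moreover have "ball (prof_center j (diag_index p)) (\<phi> (real (radius j p)))
          \<subseteq> ball (prof_center j (diag_index p)) (real (radius j p))" if "j \<in> {1..K}" for j
        using core_mass_bounds(4)[of j p] that Kp by (intro subset_ball) auto
      ultimately show "ball (prof_center i (diag_index p)) (\<phi> (real (radius i p)))
          \<inter> ball (prof_center i' (diag_index p)) (\<phi> (real (radius i' p))) = {}"
        using ii by blast
    qed
    then have "(\<Sum>i\<in>{1..K}. nu (diag_index p) (ball (prof_center i (diag_index p)) (\<phi> (real (radius i p)))))
        = nu (diag_index p) (\<Union>i\<in>{1..K}. ball (prof_center i (diag_index p)) (\<phi> (real (radius i p))))"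
      by (intro measure_finite_Union[symmetric]) (auto simp: emeasure_eq_nu[OF N] sets_mu[OF N])
    also have "\<dots> \<le> C" by (rule nu_le_C[OF N])
    finally show "(\<Sum>i\<in>{1..K}. nu (diag_index p) (ball (prof_center i (diag_index p)) (\<phi> (real (radius i p)))))
        \<le> C" .
  qed
qed

lemma radius_properties:
  assumes "active i"
  shows "0 < real (radius i p)" and "mono (\<lambda>p. real (radius i p))"
    and "filterlim (\<lambda>p. real (radius i p)) at_top sequentially"
  using radius_spec[OF assms, of p] radius_mono[OF assms] radius_at_top[OF assms]
  by (auto simp: mono_def)

lemma diag_profile:
  assumes i: "1 \<le> i" and act: "\<And>p. p0 \<le> p \<Longrightarrow> i \<le> act p"
  shows "(\<lambda>p. emeasure (\<mu> (diag_index p)) (ball (prof_center i (diag_index p)) (\<phi> (real (radius i p)))))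
           \<longlonglongrightarrow> ennreal (prof_mass i)"
    and "\<forall>p\<ge>p0. emeasure (\<mu> (diag_index p)) (ball (prof_center i (diag_index p)) (real (radius i p))
           - ball (prof_center i (diag_index p)) (\<phi> (real (radius i p)))) \<le> ennreal (1 / 2 ^ (p + i))"
    and "concentrates_from p0
           (\<lambda>p. restr (\<mu> (diag_index p)) (ball (prof_center i (diag_index p)) (real (radius i p))))
           (\<lambda>p. prof_center i (diag_index p))"
proof -
  have "active i" using assms unfolding active_def by blast
  then show "(\<lambda>p. emeasure (\<mu> (diag_index p)) (ball (prof_center i (diag_index p)) (\<phi> (real (radius i p)))))
      \<longlonglongrightarrow> ennreal (prof_mass i)"
    by (rule core_emeasure_tendsto)
  show "\<forall>p\<ge>p0. emeasure (\<mu> (diag_index p)) (ball (prof_center i (diag_index p)) (real (radius i p))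
      - ball (prof_center i (diag_index p)) (\<phi> (real (radius i p)))) \<le> ennreal (1 / 2 ^ (p + i))"
    using i act annulus_emeasure_le by simp
  show "concentrates_from p0
      (\<lambda>p. restr (\<mu> (diag_index p)) (ball (prof_center i (diag_index p)) (real (radius i p))))
      (\<lambda>p. prof_center i (diag_index p))"
    by (rule concentrates_diag[OF i act])
qed

end

section \<open>The two alternatives\<close>

context lions_setting
begin

lemma residual_mass_tendsto_0:
  assumes pos: "\<And>l. 0 < residual_mass l" and sum_le: "\<And>K. (\<Sum>i\<in>{1..K}. prof_mass i) \<le> C"
  shows "residual_mass \<longlonglongrightarrow> 0"
proof (rule decreasing_tendsto)
  show "eventually (\<lambda>l. 0 \<le> residual_mass l) sequentially" by (simp add: residual_mass_nonneg)
  fix \<epsilon> :: real assume "0 < \<epsilon>"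
  have "\<exists>l. residual_mass l < \<epsilon>"
  proof (rule ccontr)
    assume "\<not> ?thesis"
    then have eps: "\<epsilon> \<le> residual_mass l" for l by (simp add: not_less)
    have half: "\<epsilon> / 2 \<le> prof_mass (Suc l)" for l
      using eps[of l] prof_mass_Suc(3)[OF pos, of l] by linarith
    define K where "K = Suc (nat \<lceil>2 * C / \<epsilon>\<rceil>)"
    have "(\<Sum>i\<in>{1..K}. \<epsilon> / 2) \<le> (\<Sum>i\<in>{1..K}. prof_mass i)"
    proof (intro sum_mono)
      fix i assume "i \<in> {1..K}"
      then show "\<epsilon> / 2 \<le> prof_mass i" using half[of "i - 1"] by simp
    qed
    then have "real K * (\<epsilon> / 2) \<le> C" using sum_le[of K] by simp
    moreover have "2 * C / \<epsilon> < real K" unfolding K_def by linarith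
    then have "C < real K * (\<epsilon> / 2)" using \<open>0 < \<epsilon>\<close> by (simp add: field_simps)
    ultimately show False by simp
  qed
  then obtain l0 where "residual_mass l0 < \<epsilon>" by blast
  then have "residual_mass l < \<epsilon>" if "l0 \<le> l" for l
    using residual_mass_antimono[OF that] by simp
  then show "eventually (\<lambda>l. residual_mass l < \<epsilon>) sequentially"
    unfolding eventually_sequentially by blast
qed

lemma finitely_many_profiles:
  assumes "\<not> vanishing \<mu>" and "residual_mass k0 = 0"
  shows "\<exists>j::nat \<Rightarrow> nat. strict_mono_on {1..} j \<and> (\<forall>n\<ge>1. j n \<ge> 1) \<and>
      (\<exists>k::nat. \<exists>m::nat \<Rightarrow> real. \<exists>x::nat \<Rightarrow> nat \<Rightarrow> 'a. \<exists>r::nat \<Rightarrow> nat \<Rightarrow> real.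
          k \<ge> 1 \<and>
          (\<forall>i\<in>{1..k}. m i > 0 \<and> (\<forall>n\<ge>1. r i n > 0) \<and> mono_on {1..} (r i)
             \<and> filterlim (r i) at_top sequentially) \<and>
          (\<forall>n\<ge>1. disjoint_family_on (\<lambda>i. ball (x i n) (r i n)) {1..k}) \<and>
          (\<forall>i\<in>{1..k}.
             (\<lambda>n. emeasure (\<mu> (j n)) (ball (x i n) (\<phi> (r i n)))) \<longlonglongrightarrow> ennreal (m i) \<and>
             (\<forall>n\<ge>1. emeasure (\<mu> (j n)) (ball (x i n) (r i n) - ball (x i n) (\<phi> (r i n)))
                        \<le> ennreal (1 / 2 ^ (n + i))) \<and>
             concentrates_from 1 (\<lambda>n. restr (\<mu> (j n)) (ball (x i n) (r i n))) (x i)) \<and>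
          vanishing (\<lambda>n. restr (\<mu> (j n)) (UNIV - (\<Union>i\<in>{1..k}. ball (x i n) (r i n)))))"
proof -
  define k where "k = (LEAST k. residual_mass k = 0)"
  have k: "residual_mass k = 0" unfolding k_def by (rule LeastI[of _ k0]) (rule assms(2))
  have pos: "0 < residual_mass l" if "l < k" for l
    using not_less_Least[OF that[unfolded k_def]] residual_mass_nonneg[of l] by simp
  have "1 \<le> k" using k residual_mass_0_pos[OF assms(1)] by (cases k) auto
  interpret diagonal_extraction \<mu> N0 C \<phi> "\<lambda>_. k"
    using pos by unfold_locales (auto simp: mono_def)
  have active: "active i" if "i \<in> {1..k}" for i using that unfolding active_def by auto
  have "vanishing (\<lambda>p. restr (\<mu> (diag_index p)) (remainder k p))"
    unfolding vanishing_def
  proof (intro allI impI)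
    fix t :: real
    have "limsup (\<lambda>p. conc_fun (restr (\<mu> (diag_index p)) (remainder k p)) t) \<le> 0"
      using limsup_conc_fun_remainder_le[where l = k and t = t] k by simp
    then show "(\<lambda>p. conc_fun (restr (\<mu> (diag_index p)) (remainder k p)) t) \<longlonglongrightarrow> 0"
      by (intro tendsto_0_if_Limsup_eq_0_ennreal) simp
  qed
  moreover have "strict_mono_on {1..} diag_index"
    by (rule monotone_on_subset[OF strict_mono_diag_index]) simp
  moreover have "\<forall>n\<ge>1. 1 \<le> diag_index n" using diag_index_ge_N0 N0_pos le_trans by blast
  moreover have "\<forall>n\<ge>1. disjoint_family_on (\<lambda>i. ball (prof_center i (diag_index n)) (real (radius i n))) {1..k}"
    using disjoint_diag_balls by simp
  moreover have "0 < prof_mass i" "\<forall>n\<ge>1. 0 < real (radius i n)"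
    "mono_on {1..} (\<lambda>n. real (radius i n))" "filterlim (\<lambda>n. real (radius i n)) at_top sequentially"
    if "i \<in> {1..k}" for i
    using active_profile(5) radius_properties mono_imp_mono_on active[OF that] by blast+
  moreover have "(\<lambda>n. emeasure (\<mu> (diag_index n))
        (ball (prof_center i (diag_index n)) (\<phi> (real (radius i n))))) \<longlonglongrightarrow> ennreal (prof_mass i)"
    "\<forall>n\<ge>1. emeasure (\<mu> (diag_index n)) (ball (prof_center i (diag_index n)) (real (radius i n))
        - ball (prof_center i (diag_index n)) (\<phi> (real (radius i n)))) \<le> ennreal (1 / 2 ^ (n + i))"
    "concentrates_from 1
        (\<lambda>n. restr (\<mu> (diag_index n)) (ball (prof_center i (diag_index n)) (real (radius i n))))
        (\<lambda>n. prof_center i (diag_index n))"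
    if "i \<in> {1..k}" for i
    using diag_profile[of i 1] that by auto
  ultimately show ?thesis
    using \<open>1 \<le> k\<close> unfolding remainder_def
    by (intro exI[of _ diag_index] exI[of _ k] exI[of _ prof_mass]
        exI[of _ "\<lambda>i n. prof_center i (diag_index n)"] exI[of _ "\<lambda>i n. real (radius i n)"] conjI) auto
qed

lemma infinitely_many_profiles:
  assumes pos: "\<And>l. 0 < residual_mass l"
  shows "\<exists>j::nat \<Rightarrow> nat. strict_mono_on {1..} j \<and> (\<forall>n\<ge>1. j n \<ge> 1) \<and>
       (\<exists>m::nat \<Rightarrow> real. \<exists>x::nat \<Rightarrow> nat \<Rightarrow> 'a. \<exists>r::nat \<Rightarrow> nat \<Rightarrow> real.
          (\<forall>i\<ge>1. m i > 0 \<and> m (i + 1) \<le> 2 * m i \<and> (\<forall>n\<ge>i. r i n > 0) \<and> mono_on {i..} (r i)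
             \<and> filterlim (r i) at_top sequentially) \<and>
          (\<forall>n\<ge>1. disjoint_family_on (\<lambda>i. ball (x i n) (r i n)) {1..n}) \<and>
          (\<forall>i\<ge>1.
             (\<lambda>n. emeasure (\<mu> (j n)) (ball (x i n) (\<phi> (r i n)))) \<longlonglongrightarrow> ennreal (m i) \<and>
             (\<forall>n\<ge>i. emeasure (\<mu> (j n)) (ball (x i n) (r i n) - ball (x i n) (\<phi> (r i n)))
                        \<le> ennreal (1 / 2 ^ (n + i))) \<and>
             concentrates_from i (\<lambda>n. restr (\<mu> (j n)) (ball (x i n) (r i n))) (x i)) \<and>
          (\<exists>L::nat \<Rightarrow> ennreal.
             (\<forall>l\<ge>1. ((\<lambda>t. limsup (\<lambda>n. conc_fun
                  (restr (\<mu> (j n)) (UNIV - (\<Union>i\<in>{1..l}. ball (x i n) (r i n)))) t)) \<longlongrightarrow> L l) at_top)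
             \<and> L \<longlonglongrightarrow> 0) \<and>
          vanishing (\<lambda>n. restr (\<mu> (j n)) (UNIV - (\<Union>i\<in>{1..n}. ball (x i n) (r i n)))))"
proof -
  interpret diagonal_extraction \<mu> N0 C \<phi> id
    using pos by unfold_locales (auto simp: mono_def)
  have active: "active i" if "1 \<le> i" for i using that unfolding active_def by auto
  have "(\<Sum>i\<in>{1..K}. prof_mass i) \<le> C" for K using sum_prof_mass_le[of K K] by simp
  then have residual_tendsto: "(\<lambda>l. ennreal (residual_mass l)) \<longlonglongrightarrow> 0"
    using tendsto_ennrealI[OF residual_mass_tendsto_0[OF pos]] by simp
  have L_tendsto: "(\<lambda>l. SUP t. remainder_conc l t) \<longlonglongrightarrow> 0"
  proof (rule tendsto_sandwich[OF _ _ tendsto_const residual_tendsto])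
    show "eventually (\<lambda>l. 0 \<le> (SUP t. remainder_conc l t)) sequentially" by simp
    show "eventually (\<lambda>l. (SUP t. remainder_conc l t) \<le> ennreal (residual_mass l)) sequentially"
      using SUP_remainder_conc_le[of l l for l] by simp
  qed
  then have "vanishing (\<lambda>p. restr (\<mu> (diag_index p)) (remainder p p))"
    by (rule vanishing_diagonal_remainder)
  moreover have "strict_mono_on {1..} diag_index"
    by (rule monotone_on_subset[OF strict_mono_diag_index]) simp
  moreover have "\<forall>n\<ge>1. 1 \<le> diag_index n" using diag_index_ge_N0 N0_pos le_trans by blast
  moreover have "\<forall>n\<ge>1. disjoint_family_on (\<lambda>i. ball (prof_center i (diag_index n)) (real (radius i n))) {1..n}"
    using disjoint_diag_balls by simp
  moreover have "prof_mass (i + 1) \<le> 2 * prof_mass i" if "1 \<le> i" for i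
  proof -
    have "prof_mass (Suc i) \<le> residual_mass i" by (rule prof_mass_Suc(2)[OF pos])
    also have "\<dots> \<le> residual_mass (i - 1)" by (rule residual_mass_antimono) simp
    also have "\<dots> < 2 * prof_mass i" using prof_mass_Suc(3)[OF pos, of "i - 1"] that by simp
    finally show ?thesis by simp
  qed
  moreover have "0 < prof_mass i" "\<forall>n\<ge>i. 0 < real (radius i n)"
    "mono_on {i..} (\<lambda>n. real (radius i n))" "filterlim (\<lambda>n. real (radius i n)) at_top sequentially"
    if "1 \<le> i" for i
    using active_profile(5) radius_properties mono_imp_mono_on active[OF that] by blast+
  moreover have "(\<lambda>n. emeasure (\<mu> (diag_index n))
        (ball (prof_center i (diag_index n)) (\<phi> (real (radius i n))))) \<longlonglongrightarrow> ennreal (prof_mass i)"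
    "\<forall>n\<ge>i. emeasure (\<mu> (diag_index n)) (ball (prof_center i (diag_index n)) (real (radius i n))
        - ball (prof_center i (diag_index n)) (\<phi> (real (radius i n)))) \<le> ennreal (1 / 2 ^ (n + i))"
    "concentrates_from i
        (\<lambda>n. restr (\<mu> (diag_index n)) (ball (prof_center i (diag_index n)) (real (radius i n))))
        (\<lambda>n. prof_center i (diag_index n))"
    if "1 \<le> i" for i
    using diag_profile[of i i] that by auto
  ultimately show ?thesis
    using remainder_conc_tendsto_SUP L_tendsto unfolding remainder_conc_def remainder_def
    by (intro exI[of _ diag_index] exI[of _ prof_mass] exI[of _ "\<lambda>i n. prof_center i (diag_index n)"]
        exI[of _ "\<lambda>i n. real (radius i n)"] exI[of _ "\<lambda>l. SUP t. remainder_conc l t"] conjI)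
      (auto simp: remainder_conc_def remainder_def)
qed

end

theorem theorem1p5:
  fixes \<mu> :: "nat \<Rightarrow> 'a::metric_space measure"
    and \<phi> :: "real \<Rightarrow> real"
  assumes borel: "\<And>n. n \<ge> 1 \<Longrightarrow> sets (\<mu> n) = sets borel"
    and bounded: "limsup (\<lambda>n. emeasure (\<mu> n) UNIV) < \<infinity>"
    and phi_nonneg: "\<And>s. s \<ge> 0 \<Longrightarrow> \<phi> s \<ge> 0"
    and phi_mono: "mono_on {0..} \<phi>"
    and phi_half: "\<And>s. s \<ge> 0 \<Longrightarrow> \<phi> s \<le> s / 2"
    and phi_lim: "filterlim \<phi> at_top at_top"
  shows "vanishing \<mu> \<or>
    (\<exists>j::nat \<Rightarrow> nat. strict_mono_on {1..} j \<and> (\<forall>n\<ge>1. j n \<ge> 1) \<and>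
      ((\<exists>k::nat. \<exists>m::nat \<Rightarrow> real. \<exists>x::nat \<Rightarrow> nat \<Rightarrow> 'a. \<exists>r::nat \<Rightarrow> nat \<Rightarrow> real.
          k \<ge> 1 \<and>
          (\<forall>i\<in>{1..k}. m i > 0 \<and> (\<forall>n\<ge>1. r i n > 0) \<and> mono_on {1..} (r i)
             \<and> filterlim (r i) at_top sequentially) \<and>
          (\<forall>n\<ge>1. disjoint_family_on (\<lambda>i. ball (x i n) (r i n)) {1..k}) \<and>
          (\<forall>i\<in>{1..k}.
             (\<lambda>n. emeasure (\<mu> (j n)) (ball (x i n) (\<phi> (r i n)))) \<longlonglongrightarrow> ennreal (m i) \<and>
             (\<forall>n\<ge>1. emeasure (\<mu> (j n)) (ball (x i n) (r i n) - ball (x i n) (\<phi> (r i n)))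
                        \<le> ennreal (1 / 2 ^ (n + i))) \<and>
             concentrates_from 1 (\<lambda>n. restr (\<mu> (j n)) (ball (x i n) (r i n))) (x i)) \<and>
          vanishing (\<lambda>n. restr (\<mu> (j n)) (UNIV - (\<Union>i\<in>{1..k}. ball (x i n) (r i n)))))
       \<or>
       (\<exists>m::nat \<Rightarrow> real. \<exists>x::nat \<Rightarrow> nat \<Rightarrow> 'a. \<exists>r::nat \<Rightarrow> nat \<Rightarrow> real.
          (\<forall>i\<ge>1. m i > 0 \<and> m (i + 1) \<le> 2 * m i \<and> (\<forall>n\<ge>i. r i n > 0) \<and> mono_on {i..} (r i)
             \<and> filterlim (r i) at_top sequentially) \<and>
          (\<forall>n\<ge>1. disjoint_family_on (\<lambda>i. ball (x i n) (r i n)) {1..n}) \<and>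
          (\<forall>i\<ge>1.
             (\<lambda>n. emeasure (\<mu> (j n)) (ball (x i n) (\<phi> (r i n)))) \<longlonglongrightarrow> ennreal (m i) \<and>
             (\<forall>n\<ge>i. emeasure (\<mu> (j n)) (ball (x i n) (r i n) - ball (x i n) (\<phi> (r i n)))
                        \<le> ennreal (1 / 2 ^ (n + i))) \<and>
             concentrates_from i (\<lambda>n. restr (\<mu> (j n)) (ball (x i n) (r i n))) (x i)) \<and>
          (\<exists>L::nat \<Rightarrow> ennreal.
             (\<forall>l\<ge>1. ((\<lambda>t. limsup (\<lambda>n. conc_fun
                  (restr (\<mu> (j n)) (UNIV - (\<Union>i\<in>{1..l}. ball (x i n) (r i n)))) t)) \<longlongrightarrow> L l) at_top)
             \<and> L \<longlonglongrightarrow> 0) \<and>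
          vanishing (\<lambda>n. restr (\<mu> (j n)) (UNIV - (\<Union>i\<in>{1..n}. ball (x i n) (r i n)))))))"
proof -
  obtain N C where C: "0 < C" "\<And>n. N \<le> n \<Longrightarrow> emeasure (\<mu> n) UNIV \<le> ennreal C"
    using eventually_bounded_of_limsup_less_top[OF bounded] by blast
  interpret lions_setting \<mu> "max N 1" C \<phi>
  proof unfold_locales
    show "sets (\<mu> n) = sets borel" if "max N 1 \<le> n" for n using borel that by simp
    show "emeasure (\<mu> n) UNIV \<le> ennreal C" if "max N 1 \<le> n" for n using C(2) that by simp
    show "\<phi> s \<le> s" if "0 \<le> s" for s using phi_half[OF that] that by linarith
  qed (simp_all add: C(1) phi_nonneg phi_lim)
  show ?thesis
  proof (cases "vanishing \<mu>")
    case False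
    show ?thesis
    proof (cases "\<exists>k. residual_mass k = 0")
      case True
      then obtain k where "residual_mass k = 0" by blast
      from finitely_many_profiles[OF False this] show ?thesis
        by (intro disjI2, elim ex_forward conjE) (intro conjI disjI1)
    next
      case False
      then have "0 < residual_mass l" for l using residual_mass_nonneg[of l] by (simp add: order_less_le)
      from infinitely_many_profiles[OF this] show ?thesis
        by (intro disjI2, elim ex_forward conjE) (intro conjI disjI2)
    qed
  qed simp
qed

end
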